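(* Let $\boldsymbol\alpha,\boldsymbol\beta$ be multisets of $d$ rational numbers and $q$ a prime power with $(q-1)\alpha_i,(q-1)\beta_j\in\mathbb{Z}$. For every integer $m$, the quotients $$\frac{\prod_{i=1}^dg(m+\alpha_i\bar q)g(-m-\beta_i\bar q)}{g(|\boldsymbol\alpha-\boldsymbol\beta|\bar q)}\quad\text{and}\quad\frac{\prod_{i=1}^dg(m+\alpha_i\bar q)g(-m-\beta_i\bar q)}{\prod_{i=1}^dg((\alpha_i-\beta_i)\bar q)}$$ are algebraic integers lying in $\mathbb{Q}(\zeta_{q-1})$, where $|\boldsymbol\alpha-\boldsymbol\beta|=\sum_i(\alpha_i-\beta_i)$ and $\zeta_{q-1}$ is a primitive $(q-1)$-th root of unity.
   Context: Fix a nontrivial additive character $\psi_q$ of $\mathbb{F}_q$, a generator $\omega$ of the character group of $\mathbb{F}_q^\times$, $g(m)=\sum_{x\in\mathbb{F}_q^\times}\omega(x)^m\psi_q(x)$ for $m\in\mathbb{Z}$, and $\bar q=q-1$. *)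

theory Defs
  imports Complex_Main "HOL-Computational_Algebra.Polynomial"
begin

definition additive_char :: "('a::{finite,field} \<Rightarrow> complex) \<Rightarrow> bool" where
  "additive_char \<psi> \<longleftrightarrow> (\<forall>x. \<psi> x \<noteq> 0) \<and> (\<forall>x y. \<psi> (x + y) = \<psi> x * \<psi> y)"

definition mult_char :: "('a::{finite,field} \<Rightarrow> complex) \<Rightarrow> bool" where
  "mult_char \<chi> \<longleftrightarrow> (\<forall>x. x \<noteq> 0 \<longrightarrow> \<chi> x \<noteq> 0) \<and>
     (\<forall>x y. x \<noteq> 0 \<longrightarrow> y \<noteq> 0 \<longrightarrow> \<chi> (x * y) = \<chi> x * \<chi> y)"

definition char_generator :: "('a::{finite,field} \<Rightarrow> complex) \<Rightarrow> bool" where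
  "char_generator \<omega> \<longleftrightarrow> mult_char \<omega> \<and>
     (\<forall>\<chi>. mult_char \<chi> \<longrightarrow> (\<exists>k::nat. \<forall>x. x \<noteq> 0 \<longrightarrow> \<chi> x = \<omega> x ^ k))"

definition gauss_sum :: "('a::{finite,field} \<Rightarrow> complex) \<Rightarrow> ('a \<Rightarrow> complex) \<Rightarrow> int \<Rightarrow> complex" where
  "gauss_sum \<psi> \<omega> m = (\<Sum>x\<in>UNIV - {0}. (\<omega> x) powi m * \<psi> x)"

definition cyclotomic_field :: "nat \<Rightarrow> complex set" where
  "cyclotomic_field n = {poly (map_poly of_rat p) (cis (2 * pi / real n)) | p :: rat poly. True}"

end

theory Submission
  imports Defs "HOL-Library.Cardinality" "Jordan_Normal_Form.Char_Poly"
begin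

text \<open>Writing g(a) g(b) as a double sum and substituting y = x v, the terms with v = -1
  give a character sum that either vanishes or equals q - 1 (and then g(a + b) = -1), while for
  each v \<noteq> -1 the sum over x is g(a + b) times a root of unity. Hence g(a) g(b) = g(a + b) K
  with K a polynomial in the (q - 1)-th roots of unity with integer coefficients (essentially a
  Jacobi sum), and iterating this over the 2d factors gives both quotients. Such K is an algebraic
  integer: multiplication by K acts on the vector (1, \<zeta>, ..., \<zeta>^(n-1)) through an integer
  matrix, so K is a root of the monic characteristic polynomial of that matrix.\<close>

subsection \<open>Eigenvalues of integer matrices along the powers of a root of unity\<close>

definition powers_vec :: "nat \<Rightarrow> complex \<Rightarrow> complex vec" where
  "powers_vec n z = vec n (\<lambda>i. z ^ i)"

definition int_matrix_eigenvalues :: "nat \<Rightarrow> complex \<Rightarrow> complex set" where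
  "int_matrix_eigenvalues n z = {x. \<exists>M::int mat. M \<in> carrier_mat n n \<and>
     map_mat of_int M *\<^sub>v powers_vec n z = x \<cdot>\<^sub>v powers_vec n z}"

lemma algebraic_int_if_int_matrix_eigenvalue:
  assumes "n > 0" "x \<in> int_matrix_eigenvalues n z"
  shows "algebraic_int x"
proof -
  obtain M :: "int mat" where M: "M \<in> carrier_mat n n"
    "map_mat of_int M *\<^sub>v powers_vec n z = x \<cdot>\<^sub>v powers_vec n z"
    using assms(2) unfolding int_matrix_eigenvalues_def by auto
  let ?A = "map_mat (of_int :: int \<Rightarrow> complex) M"
  have A: "?A \<in> carrier_mat n n" using M by auto
  have "powers_vec n z $ 0 = 1" using assms(1) by (simp add: powers_vec_def)
  hence "powers_vec n z \<noteq> 0\<^sub>v n" using assms(1) by auto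
  hence "eigenvector ?A (powers_vec n z) x"
    unfolding eigenvector_def using M A by (auto simp: powers_vec_def)
  hence "eigenvalue ?A x" unfolding eigenvalue_def by blast
  hence "poly (char_poly ?A) x = 0" using eigenvalue_root_char_poly[OF A] by simp
  also have "char_poly ?A = map_poly of_int (char_poly M)"
    by (rule of_int_hom.char_poly_hom[OF M(1)])
  finally have root: "poly (map_poly of_int (char_poly M)) x = 0" .
  have "degree (char_poly M) = n \<and> coeff (char_poly M) n = 1"
    by (rule degree_monic_char_poly[OF M(1)])
  hence "lead_coeff (map_poly of_int (char_poly M)) = (1::complex)"
    by (simp add: degree_map_poly coeff_map_poly)
  with root show ?thesis
    by (intro algebraic_int.intros[of "map_poly of_int (char_poly M)"]) (auto simp: coeff_map_poly)
qed

lemma of_int_in_int_matrix_eigenvalues: "of_int c \<in> int_matrix_eigenvalues n z"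
proof -
  have "map_mat of_int (c \<cdot>\<^sub>m 1\<^sub>m n) *\<^sub>v powers_vec n z = of_int c \<cdot>\<^sub>v powers_vec n z"
  proof (rule eq_vecI)
    fix i assume "i < dim_vec (of_int c \<cdot>\<^sub>v powers_vec n z)"
    hence i: "i < n" by (simp add: powers_vec_def)
    have "(map_mat of_int (c \<cdot>\<^sub>m 1\<^sub>m n) *\<^sub>v powers_vec n z) $ i = of_int c * z ^ i"
      using i by (simp add: powers_vec_def scalar_prod_def if_distrib if_distribR sum.delta cong: if_cong)
    thus "(map_mat of_int (c \<cdot>\<^sub>m 1\<^sub>m n) *\<^sub>v powers_vec n z) $ i
        = (of_int c \<cdot>\<^sub>v powers_vec n z) $ i"
      using i by (simp add: powers_vec_def)
  qed (simp add: powers_vec_def)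
  thus ?thesis unfolding int_matrix_eigenvalues_def by (intro CollectI exI[of _ "c \<cdot>\<^sub>m 1\<^sub>m n"]) auto
qed

lemma add_in_int_matrix_eigenvalues:
  assumes "x \<in> int_matrix_eigenvalues n z" "y \<in> int_matrix_eigenvalues n z"
  shows "x + y \<in> int_matrix_eigenvalues n z"
proof -
  obtain M :: "int mat" where M: "M \<in> carrier_mat n n"
    "map_mat of_int M *\<^sub>v powers_vec n z = x \<cdot>\<^sub>v powers_vec n z"
    using assms(1) unfolding int_matrix_eigenvalues_def by auto
  obtain N :: "int mat" where N: "N \<in> carrier_mat n n"
    "map_mat of_int N *\<^sub>v powers_vec n z = y \<cdot>\<^sub>v powers_vec n z"
    using assms(2) unfolding int_matrix_eigenvalues_def by auto
  have "map_mat of_int (M + N) = map_mat (of_int :: int \<Rightarrow> complex) M + map_mat of_int N"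
    using M N by (intro eq_matI) auto
  hence "map_mat of_int (M + N) *\<^sub>v powers_vec n z = (x + y) \<cdot>\<^sub>v powers_vec n z"
    using M N by (simp add: add_mult_distrib_mat_vec[of _ n n] add_smult_distrib_vec powers_vec_def)
  thus ?thesis using M N unfolding int_matrix_eigenvalues_def by (intro CollectI exI[of _ "M + N"]) auto
qed

lemma mult_in_int_matrix_eigenvalues:
  assumes "x \<in> int_matrix_eigenvalues n z" "y \<in> int_matrix_eigenvalues n z"
  shows "x * y \<in> int_matrix_eigenvalues n z"
proof -
  obtain M :: "int mat" where M: "M \<in> carrier_mat n n"
    "map_mat of_int M *\<^sub>v powers_vec n z = x \<cdot>\<^sub>v powers_vec n z"
    using assms(1) unfolding int_matrix_eigenvalues_def by auto
  obtain N :: "int mat" where N: "N \<in> carrier_mat n n"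
    "map_mat of_int N *\<^sub>v powers_vec n z = y \<cdot>\<^sub>v powers_vec n z"
    using assms(2) unfolding int_matrix_eigenvalues_def by auto
  have v: "powers_vec n z \<in> carrier_vec n" by (simp add: powers_vec_def)
  have "map_mat of_int (M * N) = map_mat (of_int :: int \<Rightarrow> complex) M * map_mat of_int N"
    by (rule of_int_hom.mat_hom_mult[OF M(1) N(1)])
  hence "map_mat of_int (M * N) *\<^sub>v powers_vec n z
      = map_mat (of_int :: int \<Rightarrow> complex) M *\<^sub>v (y \<cdot>\<^sub>v powers_vec n z)"
    using M N v by (simp add: assoc_mult_mat_vec[of _ n n _ n])
  also have "\<dots> = (x * y) \<cdot>\<^sub>v powers_vec n z"
    using M v by (simp add: mult_mat_vec[of _ n n] smult_smult_assoc mult.commute)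
  finally show ?thesis
    using M N unfolding int_matrix_eigenvalues_def by (intro CollectI exI[of _ "M * N"]) auto
qed

lemma root_of_unity_in_int_matrix_eigenvalues:
  assumes "n > 0" "z ^ n = 1"
  shows "z \<in> int_matrix_eigenvalues n z"
proof -
  define P :: "int mat" where "P = mat n n (\<lambda>(j, k). if k = Suc j mod n then 1 else 0)"
  have "map_mat of_int P *\<^sub>v powers_vec n z = z \<cdot>\<^sub>v powers_vec n z"
  proof (rule eq_vecI)
    fix j assume "j < dim_vec (z \<cdot>\<^sub>v powers_vec n z)"
    hence j: "j < n" by (simp add: powers_vec_def)
    have "(map_mat of_int P *\<^sub>v powers_vec n z) $ j = z ^ (Suc j mod n)"
      using j assms(1) by (simp add: P_def powers_vec_def scalar_prod_def if_distrib if_distribR sum.delta cong: if_cong)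
    also have "\<dots> = z ^ Suc j"
      using assms j by (cases "Suc j = n") auto
    finally show "(map_mat of_int P *\<^sub>v powers_vec n z) $ j = (z \<cdot>\<^sub>v powers_vec n z) $ j"
      using j by (simp add: powers_vec_def)
  qed (simp add: P_def powers_vec_def)
  thus ?thesis unfolding int_matrix_eigenvalues_def by (intro CollectI exI[of _ P]) (auto simp: P_def)
qed

subsection \<open>Cyclotomic integers\<close>

lemma cyclotomic_field_add:
  assumes "x \<in> cyclotomic_field n" "y \<in> cyclotomic_field n"
  shows "x + y \<in> cyclotomic_field n"
proof -
  obtain p r where "x = poly (map_poly of_rat p) (cis (2 * pi / real n))"
    "y = poly (map_poly of_rat r) (cis (2 * pi / real n))"
    using assms unfolding cyclotomic_field_def by auto
  hence "x + y = poly (map_poly of_rat (p + r)) (cis (2 * pi / real n))" by (simp add: hom_distribs)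
  thus ?thesis unfolding cyclotomic_field_def by blast
qed

lemma cyclotomic_field_mult:
  assumes "x \<in> cyclotomic_field n" "y \<in> cyclotomic_field n"
  shows "x * y \<in> cyclotomic_field n"
proof -
  obtain p r where "x = poly (map_poly of_rat p) (cis (2 * pi / real n))"
    "y = poly (map_poly of_rat r) (cis (2 * pi / real n))"
    using assms unfolding cyclotomic_field_def by auto
  moreover have "map_poly (of_rat :: rat \<Rightarrow> complex) (p * r) = map_poly of_rat p * map_poly of_rat r"
    by (induct p) (auto simp: hom_distribs)
  ultimately have "x * y = poly (map_poly of_rat (p * r)) (cis (2 * pi / real n))" by simp
  thus ?thesis unfolding cyclotomic_field_def by blast
qed

lemma of_int_in_cyclotomic_field: "of_int c \<in> cyclotomic_field n"
proof -
  have "of_int c = poly (map_poly of_rat [:of_int c:]) (cis (2 * pi / real n))" by (simp add: hom_distribs)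
  thus ?thesis unfolding cyclotomic_field_def by blast
qed

lemma cis_in_cyclotomic_field: "cis (2 * pi / real n) \<in> cyclotomic_field n"
proof -
  have "cis (2 * pi / real n) = poly (map_poly of_rat [:0, 1:]) (cis (2 * pi / real n))" by simp
  thus ?thesis unfolding cyclotomic_field_def by blast
qed

text \<open>A subring of the ring of integers of Q(\<zeta>_n) containing \<zeta>_n; whether it is all of it does
  not matter here.\<close>
definition cyclotomic_integers :: "nat \<Rightarrow> complex set" where
  "cyclotomic_integers n = int_matrix_eigenvalues n (cis (2 * pi / real n)) \<inter> cyclotomic_field n"

lemma cyclotomic_integers_add:
  "x \<in> cyclotomic_integers n \<Longrightarrow> y \<in> cyclotomic_integers n \<Longrightarrow> x + y \<in> cyclotomic_integers n"
  unfolding cyclotomic_integers_def by (auto intro: add_in_int_matrix_eigenvalues cyclotomic_field_add)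

lemma cyclotomic_integers_mult:
  "x \<in> cyclotomic_integers n \<Longrightarrow> y \<in> cyclotomic_integers n \<Longrightarrow> x * y \<in> cyclotomic_integers n"
  unfolding cyclotomic_integers_def by (auto intro: mult_in_int_matrix_eigenvalues cyclotomic_field_mult)

lemma of_int_in_cyclotomic_integers: "of_int c \<in> cyclotomic_integers n"
  unfolding cyclotomic_integers_def by (auto intro: of_int_in_int_matrix_eigenvalues of_int_in_cyclotomic_field)

lemma of_nat_in_cyclotomic_integers: "of_nat k \<in> cyclotomic_integers n"
  using of_int_in_cyclotomic_integers[of "int k" n] by simp

lemma cyclotomic_integers_diff:
  "x \<in> cyclotomic_integers n \<Longrightarrow> y \<in> cyclotomic_integers n \<Longrightarrow> x - y \<in> cyclotomic_integers n"
  using cyclotomic_integers_add[of x n "of_int (-1) * y"]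
    cyclotomic_integers_mult[OF of_int_in_cyclotomic_integers[of "-1"]] by simp

lemma cyclotomic_integers_power:
  "x \<in> cyclotomic_integers n \<Longrightarrow> x ^ k \<in> cyclotomic_integers n"
  using of_int_in_cyclotomic_integers[of 1 n] by (induction k) (auto intro: cyclotomic_integers_mult)

lemma cyclotomic_integers_sum:
  "(\<And>i. i \<in> A \<Longrightarrow> f i \<in> cyclotomic_integers n) \<Longrightarrow> sum f A \<in> cyclotomic_integers n"
  using of_int_in_cyclotomic_integers[of 0 n]
  by (induction A rule: infinite_finite_induct) (auto intro: cyclotomic_integers_add)

lemma cyclotomic_integers_prod:
  "(\<And>i. i \<in> A \<Longrightarrow> f i \<in> cyclotomic_integers n) \<Longrightarrow> prod f A \<in> cyclotomic_integers n"
  using of_int_in_cyclotomic_integers[of 1 n]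
  by (induction A rule: infinite_finite_induct) (auto intro: cyclotomic_integers_mult)

text \<open>A vanishing divisor G gives P / G = 0, which also lies in the ring.\<close>
lemma divide_in_cyclotomic_integers:
  "P = G * K \<Longrightarrow> K \<in> cyclotomic_integers n \<Longrightarrow> P / G \<in> cyclotomic_integers n"
  using of_int_in_cyclotomic_integers[of 0 n] by (cases "G = 0") auto

lemma algebraic_int_if_cyclotomic_integer:
  "n > 0 \<Longrightarrow> x \<in> cyclotomic_integers n \<Longrightarrow> algebraic_int x"
  unfolding cyclotomic_integers_def by (auto intro: algebraic_int_if_int_matrix_eigenvalue)

lemma root_of_unity_in_cyclotomic_integers:
  assumes n: "n > 0" and z: "z ^ n = 1"
  shows "z \<in> cyclotomic_integers n"
proof -
  obtain k where k: "z = cis (2 * pi * real k / real n)"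
    using z bij_betw_roots_unity[OF n] unfolding bij_betw_def by auto
  have "cis (2 * pi / real n) ^ n = 1" using n by (simp add: DeMoivre)
  hence "cis (2 * pi / real n) \<in> cyclotomic_integers n"
    unfolding cyclotomic_integers_def
    using root_of_unity_in_int_matrix_eigenvalues[OF n] cis_in_cyclotomic_field by auto
  hence "cis (2 * pi / real n) ^ k \<in> cyclotomic_integers n" by (rule cyclotomic_integers_power)
  thus ?thesis by (simp add: k DeMoivre mult.commute)
qed

subsection \<open>Characters of a finite field\<close>

lemma card_nonzero_field: "card (UNIV - {0::'a::{finite,field}}) = CARD('a) - 1"
  by (simp add: card_Diff_singleton)

lemma card_field_gt_1: "CARD('a::{finite,field}) - 1 > 0"
proof -
  have "(1::'a) \<in> UNIV - {0}" by simp
  hence "card (UNIV - {0::'a}) > 0" by (metis card_gt_0_iff empty_iff finite)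
  thus ?thesis by (simp add: card_nonzero_field)
qed

lemma bij_betw_mult_nonzero:
  "(x::'a::field) \<noteq> 0 \<Longrightarrow> bij_betw ((*) x) (UNIV - {0}) (UNIV - {0})"
  by (rule bij_betwI[where g = "\<lambda>y. y / x"]) auto

lemma power_card_minus_one_eq_1:
  assumes x: "(x::'a::{finite,field}) \<noteq> 0"
  shows "x ^ (CARD('a) - 1) = 1"
proof -
  let ?U = "UNIV - {0::'a}"
  have "(\<Prod>y\<in>?U. x * y) = (\<Prod>y\<in>?U. y)"
    using prod.reindex_bij_betw[OF bij_betw_mult_nonzero[OF x], of "\<lambda>y. y"] by simp
  hence "x ^ card ?U * (\<Prod>y\<in>?U. y) = 1 * (\<Prod>y\<in>?U. y)" by (simp add: prod.distrib)
  moreover have "(\<Prod>y\<in>?U. y) \<noteq> 0" by simp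
  ultimately show ?thesis by (metis mult_right_cancel card_nonzero_field)
qed

text \<open>The Jacobi sum J(\<omega>^a, \<omega>^b), written in the variable v = u / (1 - u).\<close>
definition jacobi_sum :: "('a::{finite,field} \<Rightarrow> complex) \<Rightarrow> int \<Rightarrow> int \<Rightarrow> complex" where
  "jacobi_sum \<omega> a b = (\<Sum>v\<in>UNIV - {0, -1}. \<omega> v powi b * \<omega> (inverse (1 + v)) powi (a + b))"

context
  fixes \<omega> :: "'a::{finite,field} \<Rightarrow> complex"
  assumes \<omega>: "mult_char \<omega>"
begin

lemma mult_char_nonzero: "x \<noteq> 0 \<Longrightarrow> \<omega> x \<noteq> 0"
  using \<omega> unfolding mult_char_def by auto

lemma mult_char_mult: "x \<noteq> 0 \<Longrightarrow> y \<noteq> 0 \<Longrightarrow> \<omega> (x * y) = \<omega> x * \<omega> y"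
  using \<omega> unfolding mult_char_def by auto

lemma mult_char_1: "\<omega> 1 = 1"
  using mult_char_mult[of 1 1] mult_char_nonzero[of 1] by simp

lemma mult_char_power: "x \<noteq> 0 \<Longrightarrow> \<omega> (x ^ k) = \<omega> x ^ k"
  by (induction k) (auto simp: mult_char_1 mult_char_mult)

lemma mult_char_inverse: "x \<noteq> 0 \<Longrightarrow> inverse (\<omega> x) = \<omega> (inverse x)"
  using mult_char_mult[of x "inverse x"] mult_char_1 mult_char_nonzero[of x] by (simp add: field_simps)

lemma mult_char_powi_mult: "x \<noteq> 0 \<Longrightarrow> y \<noteq> 0 \<Longrightarrow> \<omega> (x * y) powi a = \<omega> x powi a * \<omega> y powi a"
  by (simp add: mult_char_mult power_int_mult_distrib)

lemma mult_char_powi_add: "x \<noteq> 0 \<Longrightarrow> \<omega> x powi (a + b) = \<omega> x powi a * \<omega> x powi b"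
  by (simp add: mult_char_nonzero power_int_add)

lemma mult_char_powi_in_cyclotomic_integers:
  assumes x: "x \<noteq> 0"
  shows "\<omega> x powi a \<in> cyclotomic_integers (CARD('a) - 1)"
proof -
  have "\<omega> y \<in> cyclotomic_integers (CARD('a) - 1)" if y: "y \<noteq> 0" for y
  proof (rule root_of_unity_in_cyclotomic_integers[OF card_field_gt_1])
    show "\<omega> y ^ (CARD('a) - 1) = 1"
      using mult_char_power[OF y, of "CARD('a) - 1"] power_card_minus_one_eq_1[OF y] mult_char_1 by simp
  qed
  thus ?thesis
    unfolding power_int_def using x mult_char_inverse by (auto intro!: cyclotomic_integers_power)
qed

lemma sum_mult_char_powi_eq_0:
  assumes "x0 \<noteq> 0" "\<omega> x0 powi c \<noteq> 1"
  shows "(\<Sum>x\<in>UNIV - {0}. \<omega> x powi c) = 0"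
proof -
  let ?T = "\<Sum>x\<in>UNIV - {0}. \<omega> x powi c"
  have "?T = (\<Sum>x\<in>UNIV - {0}. \<omega> (x0 * x) powi c)"
    using sum.reindex_bij_betw[OF bij_betw_mult_nonzero[OF assms(1)], of "\<lambda>x. \<omega> x powi c"] by simp
  also have "\<dots> = \<omega> x0 powi c * ?T"
    unfolding sum_distrib_left using assms(1) by (intro sum.cong) (auto simp: mult_char_powi_mult)
  finally have "(\<omega> x0 powi c - 1) * ?T = 0" by (simp add: algebra_simps)
  thus ?thesis using assms(2) by simp
qed

lemma jacobi_sum_in_cyclotomic_integers: "jacobi_sum \<omega> a b \<in> cyclotomic_integers (CARD('a) - 1)"
  unfolding jacobi_sum_def
  by (intro cyclotomic_integers_sum cyclotomic_integers_mult mult_char_powi_in_cyclotomic_integers)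
    (auto simp: add_eq_0_iff)

end

lemma additive_char_add: "additive_char \<psi> \<Longrightarrow> \<psi> (x + y) = \<psi> x * \<psi> y"
  unfolding additive_char_def by auto

lemma additive_char_0: "additive_char \<psi> \<Longrightarrow> \<psi> 0 = 1"
  using additive_char_add[of \<psi> 0 0] unfolding additive_char_def by (metis add_0 mult_cancel_right1)

lemma sum_additive_char_nonzero:
  fixes \<psi> :: "'a::{finite,field} \<Rightarrow> complex"
  assumes \<psi>: "additive_char \<psi>" and \<psi>_nontrivial: "\<psi> \<noteq> (\<lambda>_. 1)"
  shows "(\<Sum>x\<in>UNIV - {0}. \<psi> x) = -1"
proof -
  obtain y where y: "\<psi> y \<noteq> 1" using \<psi>_nontrivial by auto
  have "(\<Sum>x\<in>UNIV. \<psi> (y + x)) = (\<Sum>x\<in>UNIV. \<psi> x)"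
    by (rule sum.reindex_bij_betw) (rule bij_betwI[where g = "\<lambda>z. z - y"], auto)
  hence "(\<psi> y - 1) * (\<Sum>x\<in>UNIV. \<psi> x) = 0"
    by (simp add: additive_char_add[OF \<psi>] sum_distrib_left algebra_simps)
  hence "(\<Sum>x\<in>UNIV. \<psi> x) = 0" using y by simp
  moreover have "(\<Sum>x\<in>UNIV. \<psi> x) = \<psi> 0 + (\<Sum>x\<in>UNIV - {0}. \<psi> x)" by (rule sum.remove) auto
  ultimately show ?thesis using additive_char_0[OF \<psi>] by (simp add: add_eq_0_iff)
qed

subsection \<open>Products of Gauss sums\<close>

locale gauss_sums =
  fixes \<psi> \<omega> :: "'a::{finite,field} \<Rightarrow> complex"
  assumes additive: "additive_char \<psi>" and nontrivial: "\<psi> \<noteq> (\<lambda>_. 1)"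
    and multiplicative: "mult_char \<omega>"
begin

abbreviation g :: "int \<Rightarrow> complex" where "g \<equiv> gauss_sum \<psi> \<omega>"

lemma gauss_sum_trivial_char:
  assumes "\<And>x. x \<noteq> 0 \<Longrightarrow> \<omega> x powi c = 1"
  shows "g c = -1"
  unfolding gauss_sum_def using assms sum_additive_char_nonzero[OF additive nontrivial] by simp

lemma gauss_sum_dilate:
  assumes w: "w \<noteq> 0"
  shows "(\<Sum>x\<in>UNIV - {0}. \<omega> x powi c * \<psi> (x * w)) = \<omega> (inverse w) powi c * g c"
proof -
  let ?u = "inverse w"
  have u: "?u \<noteq> 0" using w by simp
  have "(\<Sum>x\<in>UNIV - {0}. \<omega> x powi c * \<psi> (x * w))
      = (\<Sum>t\<in>UNIV - {0}. \<omega> (?u * t) powi c * \<psi> (?u * t * w))"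
    using sum.reindex_bij_betw[OF bij_betw_mult_nonzero[OF u], of "\<lambda>x. \<omega> x powi c * \<psi> (x * w)"]
    by simp
  also have "\<dots> = (\<Sum>t\<in>UNIV - {0}. \<omega> ?u powi c * (\<omega> t powi c * \<psi> t))"
  proof (rule sum.cong[OF refl])
    fix t :: 'a assume t: "t \<in> UNIV - {0}"
    have cancel: "?u * t * w = t" using w by (simp add: field_simps)
    show "\<omega> (?u * t) powi c * \<psi> (?u * t * w) = \<omega> ?u powi c * (\<omega> t powi c * \<psi> t)"
      unfolding cancel using t u by (simp add: mult_char_powi_mult[OF multiplicative])
  qed
  finally show ?thesis unfolding gauss_sum_def by (simp add: sum_distrib_left)
qed

lemma gauss_sum_mult_expand:
  "g a * g b = \<omega> (-1) powi b * (\<Sum>x\<in>UNIV - {0}. \<omega> x powi (a + b)) + g (a + b) * jacobi_sum \<omega> a b"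
proof -
  let ?U = "UNIV - {0::'a}"
  define I where "I v = (\<Sum>x\<in>?U. \<omega> x powi (a + b) * \<psi> (x * (1 + v)))" for v
  have substitute: "(\<Sum>y\<in>?U. \<omega> x powi a * \<psi> x * (\<omega> y powi b * \<psi> y))
      = (\<Sum>v\<in>?U. \<omega> v powi b * (\<omega> x powi (a + b) * \<psi> (x * (1 + v))))" if x: "x \<in> ?U" for x
  proof -
    have "(\<Sum>y\<in>?U. \<omega> x powi a * \<psi> x * (\<omega> y powi b * \<psi> y))
        = (\<Sum>v\<in>?U. \<omega> x powi a * \<psi> x * (\<omega> (x * v) powi b * \<psi> (x * v)))"
      using x sum.reindex_bij_betw[OF bij_betw_mult_nonzero[of x],
          of "\<lambda>y. \<omega> x powi a * \<psi> x * (\<omega> y powi b * \<psi> y)"] by simp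
    also have "\<dots> = (\<Sum>v\<in>?U. \<omega> v powi b * (\<omega> x powi (a + b) * \<psi> (x * (1 + v))))"
    proof (rule sum.cong[OF refl])
      fix v assume v: "v \<in> ?U"
      have "\<psi> (x * (1 + v)) = \<psi> x * \<psi> (x * v)"
        by (simp add: distrib_left additive_char_add[OF additive])
      thus "\<omega> x powi a * \<psi> x * (\<omega> (x * v) powi b * \<psi> (x * v))
          = \<omega> v powi b * (\<omega> x powi (a + b) * \<psi> (x * (1 + v)))"
        using x v by (simp add: mult_char_powi_mult[OF multiplicative]
            mult_char_powi_add[OF multiplicative] mult_ac)
    qed
    finally show ?thesis .
  qed
  have "g a * g b = (\<Sum>x\<in>?U. \<Sum>y\<in>?U. \<omega> x powi a * \<psi> x * (\<omega> y powi b * \<psi> y))"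
    unfolding gauss_sum_def by (rule sum_product)
  also have "\<dots> = (\<Sum>x\<in>?U. \<Sum>v\<in>?U. \<omega> v powi b * (\<omega> x powi (a + b) * \<psi> (x * (1 + v))))"
    by (rule sum.cong[OF refl substitute])
  also have "\<dots> = (\<Sum>v\<in>?U. \<omega> v powi b * I v)"
    unfolding I_def sum_distrib_left by (rule sum.swap)
  also have "\<dots> = \<omega> (-1) powi b * I (-1) + (\<Sum>v\<in>?U - {-1}. \<omega> v powi b * I v)"
    by (rule sum.remove) auto
  also have "I (-1) = (\<Sum>x\<in>?U. \<omega> x powi (a + b))"
    unfolding I_def by (simp add: additive_char_0[OF additive])
  also have "(\<Sum>v\<in>?U - {-1}. \<omega> v powi b * I v) = g (a + b) * jacobi_sum \<omega> a b"
  proof -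
    have "\<omega> v powi b * I v = g (a + b) * (\<omega> v powi b * \<omega> (inverse (1 + v)) powi (a + b))"
      if "v \<noteq> -1" for v
      using gauss_sum_dilate[of "1 + v" "a + b"] that unfolding I_def by (simp add: add_eq_0_iff)
    moreover have "?U - {-1} = UNIV - {0, -1}" by auto
    ultimately show ?thesis unfolding jacobi_sum_def sum_distrib_left by (intro sum.cong) auto
  qed
  finally show ?thesis .
qed

lemma gauss_sum_mult_factor:
  "\<exists>K \<in> cyclotomic_integers (CARD('a) - 1). g a * g b = g (a + b) * K"
proof (cases "\<forall>x. x \<noteq> 0 \<longrightarrow> \<omega> x powi (a + b) = 1")
  case True
  let ?K = "jacobi_sum \<omega> a b - \<omega> (-1) powi b * of_nat (CARD('a) - 1)"
  have "g a * g b = g (a + b) * ?K"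
    using gauss_sum_mult_expand[of a b] gauss_sum_trivial_char[of "a + b"] True
    by (simp add: card_nonzero_field algebra_simps)
  moreover have "?K \<in> cyclotomic_integers (CARD('a) - 1)"
    by (intro cyclotomic_integers_diff cyclotomic_integers_mult of_nat_in_cyclotomic_integers
        jacobi_sum_in_cyclotomic_integers[OF multiplicative]
        mult_char_powi_in_cyclotomic_integers[OF multiplicative]) simp
  ultimately show ?thesis by blast
next
  case False
  then obtain x0 where "x0 \<noteq> 0" "\<omega> x0 powi (a + b) \<noteq> 1" by auto
  hence "g a * g b = g (a + b) * jacobi_sum \<omega> a b"
    using gauss_sum_mult_expand[of a b] sum_mult_char_powi_eq_0[OF multiplicative] by simp
  thus ?thesis using jacobi_sum_in_cyclotomic_integers[OF multiplicative] by blast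
qed

lemma gauss_sum_prod_factor:
  fixes x y :: "nat \<Rightarrow> int" and d :: nat
  shows "\<exists>K \<in> cyclotomic_integers (CARD('a) - 1).
    (\<Prod>i<d. g (x i) * g (y i)) = g (\<Sum>i<d. x i + y i) * K"
proof (induction d)
  case 0
  have "g 0 = -1" by (rule gauss_sum_trivial_char) simp
  moreover have "-1 \<in> cyclotomic_integers (CARD('a) - 1)" using of_int_in_cyclotomic_integers[of "-1"] by simp
  ultimately show ?case by (intro bexI[of _ "-1"]) auto
next
  case (Suc d)
  define s where "s = (\<Sum>i<d. x i + y i)"
  obtain K where K: "K \<in> cyclotomic_integers (CARD('a) - 1)"
    "(\<Prod>i<d. g (x i) * g (y i)) = g s * K"
    using Suc.IH unfolding s_def by blast
  obtain K1 where K1: "K1 \<in> cyclotomic_integers (CARD('a) - 1)"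
    "g s * g (x d) = g (s + x d) * K1"
    using gauss_sum_mult_factor by blast
  obtain K2 where K2: "K2 \<in> cyclotomic_integers (CARD('a) - 1)"
    "g (s + x d) * g (y d) = g (s + x d + y d) * K2"
    using gauss_sum_mult_factor by blast
  have "(\<Prod>i<Suc d. g (x i) * g (y i)) = g s * g (x d) * g (y d) * K"
    using K(2) by (simp add: mult_ac)
  also have "\<dots> = g (s + x d + y d) * (K2 * K1 * K)"
    using K1(2) K2(2) by (simp add: mult_ac)
  also have "s + x d + y d = (\<Sum>i<Suc d. x i + y i)"
    by (simp add: s_def)
  finally show ?case using K K1 K2 by (meson cyclotomic_integers_mult)
qed

lemma gauss_sum_prod_quotients:
  fixes x y :: "nat \<Rightarrow> int" and d :: nat
  shows "(\<Prod>i<d. g (x i) * g (y i)) / g (\<Sum>i<d. x i + y i) \<in> cyclotomic_integers (CARD('a) - 1)"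
    and "(\<Prod>i<d. g (x i) * g (y i)) / (\<Prod>i<d. g (x i + y i)) \<in> cyclotomic_integers (CARD('a) - 1)"
proof -
  show "(\<Prod>i<d. g (x i) * g (y i)) / g (\<Sum>i<d. x i + y i) \<in> cyclotomic_integers (CARD('a) - 1)"
    using gauss_sum_prod_factor divide_in_cyclotomic_integers by blast
  have "g (x i) * g (y i) / g (x i + y i) \<in> cyclotomic_integers (CARD('a) - 1)" for i
    using gauss_sum_mult_factor divide_in_cyclotomic_integers by blast
  thus "(\<Prod>i<d. g (x i) * g (y i)) / (\<Prod>i<d. g (x i + y i)) \<in> cyclotomic_integers (CARD('a) - 1)"
    unfolding prod_dividef[symmetric] by (rule cyclotomic_integers_prod)
qed

end

lemma floor_diff_Ints:
  "(a::'b::floor_ceiling) \<in> \<int> \<Longrightarrow> b \<in> \<int> \<Longrightarrow> \<lfloor>a - b\<rfloor> = \<lfloor>a\<rfloor> - \<lfloor>b\<rfloor>"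
  by (auto elim!: Ints_cases simp flip: of_int_diff)

lemma floor_sum_Ints:
  assumes "\<And>i. i \<in> A \<Longrightarrow> (f i :: 'b::floor_ceiling) \<in> \<int>"
  shows "\<lfloor>sum f A\<rfloor> = (\<Sum>i\<in>A. \<lfloor>f i\<rfloor>)"
proof -
  have "sum f A = of_int (\<Sum>i\<in>A. \<lfloor>f i\<rfloor>)" using assms by (simp add: of_int_floor)
  thus ?thesis by (simp only: floor_of_int)
qed

theorem mainTheorem8:
  fixes \<psi> \<omega> :: "'a::{finite,field} \<Rightarrow> complex"
    and d :: nat and \<alpha> \<beta> :: "nat \<Rightarrow> rat" and m :: int
  defines "q \<equiv> card (UNIV :: 'a set)"
  assumes psi: "additive_char \<psi>" "\<psi> \<noteq> (\<lambda>_. 1)"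
    and omega: "char_generator \<omega>"
    and int_alpha: "\<And>i. i < d \<Longrightarrow> of_nat (q - 1) * \<alpha> i \<in> \<int>"
    and int_beta: "\<And>i. i < d \<Longrightarrow> of_nat (q - 1) * \<beta> i \<in> \<int>"
  shows
    "algebraic_int ((\<Prod>i<d. gauss_sum \<psi> \<omega> (m + \<lfloor>\<alpha> i * of_nat (q - 1)\<rfloor>)
                          * gauss_sum \<psi> \<omega> (- m - \<lfloor>\<beta> i * of_nat (q - 1)\<rfloor>))
        / gauss_sum \<psi> \<omega> \<lfloor>(\<Sum>i<d. \<alpha> i - \<beta> i) * of_nat (q - 1)\<rfloor>)
     \<and> (\<Prod>i<d. gauss_sum \<psi> \<omega> (m + \<lfloor>\<alpha> i * of_nat (q - 1)\<rfloor>)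
                          * gauss_sum \<psi> \<omega> (- m - \<lfloor>\<beta> i * of_nat (q - 1)\<rfloor>))
        / gauss_sum \<psi> \<omega> \<lfloor>(\<Sum>i<d. \<alpha> i - \<beta> i) * of_nat (q - 1)\<rfloor>
       \<in> cyclotomic_field (q - 1)
     \<and> algebraic_int ((\<Prod>i<d. gauss_sum \<psi> \<omega> (m + \<lfloor>\<alpha> i * of_nat (q - 1)\<rfloor>)
                          * gauss_sum \<psi> \<omega> (- m - \<lfloor>\<beta> i * of_nat (q - 1)\<rfloor>))
        / (\<Prod>i<d. gauss_sum \<psi> \<omega> \<lfloor>(\<alpha> i - \<beta> i) * of_nat (q - 1)\<rfloor>))
     \<and> (\<Prod>i<d. gauss_sum \<psi> \<omega> (m + \<lfloor>\<alpha> i * of_nat (q - 1)\<rfloor>)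
                          * gauss_sum \<psi> \<omega> (- m - \<lfloor>\<beta> i * of_nat (q - 1)\<rfloor>))
        / (\<Prod>i<d. gauss_sum \<psi> \<omega> \<lfloor>(\<alpha> i - \<beta> i) * of_nat (q - 1)\<rfloor>)
       \<in> cyclotomic_field (q - 1)"
proof -
  interpret gauss_sums \<psi> \<omega>
    using psi omega by unfold_locales (simp_all add: char_generator_def)
  let ?n = "of_nat (q - 1) :: rat"
  define x where "x i = m + \<lfloor>\<alpha> i * ?n\<rfloor>" for i
  define y where "y i = - m - \<lfloor>\<beta> i * ?n\<rfloor>" for i
  have single: "\<lfloor>(\<alpha> i - \<beta> i) * ?n\<rfloor> = x i + y i" if "i < d" for i
    using floor_diff_Ints[of "\<alpha> i * ?n" "\<beta> i * ?n"] int_alpha[OF that] int_beta[OF that]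
    by (simp add: x_def y_def left_diff_distrib mult.commute)
  have "\<lfloor>(\<Sum>i<d. \<alpha> i - \<beta> i) * ?n\<rfloor> = (\<Sum>i<d. \<lfloor>(\<alpha> i - \<beta> i) * ?n\<rfloor>)"
    unfolding sum_distrib_right using int_alpha int_beta
    by (intro floor_sum_Ints) (auto simp: left_diff_distrib mult.commute)
  hence total: "\<lfloor>(\<Sum>i<d. \<alpha> i - \<beta> i) * ?n\<rfloor> = (\<Sum>i<d. x i + y i)"
    using single by simp
  have "(\<Prod>i<d. g \<lfloor>(\<alpha> i - \<beta> i) * ?n\<rfloor>) = (\<Prod>i<d. g (x i + y i))"
    using single by simp
  with total gauss_sum_prod_quotients[of x y d]
  have "(\<Prod>i<d. g (x i) * g (y i)) / g \<lfloor>(\<Sum>i<d. \<alpha> i - \<beta> i) * ?n\<rfloor> \<in> cyclotomic_integers (q - 1)"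
    and "(\<Prod>i<d. g (x i) * g (y i)) / (\<Prod>i<d. g \<lfloor>(\<alpha> i - \<beta> i) * ?n\<rfloor>) \<in> cyclotomic_integers (q - 1)"
    unfolding q_def by simp_all
  moreover have "algebraic_int z \<and> z \<in> cyclotomic_field (q - 1)"
    if "z \<in> cyclotomic_integers (q - 1)" for z
    using that algebraic_int_if_cyclotomic_integer[OF card_field_gt_1[where 'a='a]]
    unfolding q_def cyclotomic_integers_def by blast
  ultimately show ?thesis unfolding x_def y_def by blast
qed

end
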